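(* Let $p\ge1$ and let $\Gamma_j=[\alpha_j,\beta_j]$, $j=1,\ldots,p$, be intervals with $\beta_j<\alpha_{j+1}$ for $j=1,\ldots,p-1$. Let $w_1,\ldots,w_p$ be non-negative weight functions on $\mathbb R$ with $w_j(x)=0$ for $x\notin\Gamma_j$. Let $\vec n=(n_1,\ldots,n_p)\in\mathbb N^p$, $n=n_1+\cdots+n_p$, $N_j=n_1+\cdots+n_j$, $N_0=0$, and define $g_{i+N_{j-1}}(x)=x^{i-1}w_j(x)$ for $i=1,\ldots,n_j$, $j=1,\ldots,p$. Then: (i) $\det\left[g_j(x_k)\right]_{j,k=1,\ldots,n}\ge 0$ for every choice of real points $x_1<x_2<\cdots<x_n$; consequently $\det[x_k^{j-1}]_{j,k=1,\ldots,n}\cdot\det[g_j(x_k)]_{j,k=1,\ldots,n}\ge 0$ on all of $\mathbb R^n$. (ii) If $x_1<\cdots<x_n$ and $x^{(j)}_k:=x_{N_{j-1}+k}\in\Gamma_j$ for $k=1,\ldots,n_j$, $j=1,\ldots,p$, then, writing $X^{(i)}=(x^{(i)}_1,\ldots,x^{(i)}_{n_i})$ and $X=(x_1,\ldots,x_n)$, \[\det\left[g_j(x_k)\right]=\prod_{i=1}^p\Big(\Delta(X^{(i)})\prod_{k=1}^{n_i}w_i(x^{(i)}_k)\Big),\] and \[\det[x_k^{j-1}]\cdot\det[g_j(x_k)]=\prod_{i=1}^p\Delta(X^{(i)})^2\cdot\prod_{1\le i<j\le p}\Delta(X^{(i)},X^{(j)})\cdot\prod_{i=1}^p\prod_{k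=1}^{n_i}w_i(x^{(i)}_k).\]
   Context: For $X=(x_1,\ldots,x_m)$, $\Delta(X)=\prod_{1\le j<k\le m}(x_k-x_j)$; for $X=(x_1,\ldots,x_m)$ and $Y=(y_1,\ldots,y_l)$, $\Delta(X,Y)=\prod_{k=1}^m\prod_{j=1}^l(x_k-y_j)$. Such weights form an Angelesco system. *)

theory Defs
  imports Main "Jordan_Normal_Form.Determinant"
begin

text \<open>Indices are 0-based: intervals/weights/block sizes are indexed by j < p,
  points by k < n.\<close>

definition Delta :: "real list \<Rightarrow> real" where
  "Delta xs = (\<Prod>k<length xs. \<Prod>j<k. xs ! k - xs ! j)"

definition Delta2 :: "real list \<Rightarrow> real list \<Rightarrow> real" where
  "Delta2 xs ys = (\<Prod>k<length xs. \<Prod>j<length ys. xs ! k - ys ! j)"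

definition Nsum :: "(nat \<Rightarrow> nat) \<Rightarrow> nat \<Rightarrow> nat" where
  "Nsum ns j = (\<Sum>i<j. ns i)"

definition gfun :: "nat \<Rightarrow> (nat \<Rightarrow> nat) \<Rightarrow> (nat \<Rightarrow> real \<Rightarrow> real) \<Rightarrow> nat \<Rightarrow> real \<Rightarrow> real" where
  "gfun p ns w m x =
     (let j = (THE j. j < p \<and> Nsum ns j \<le> m \<and> m < Nsum ns (Suc j))
      in x ^ (m - Nsum ns j) * w j x)"

definition Gmat :: "nat \<Rightarrow> (nat \<Rightarrow> nat) \<Rightarrow> (nat \<Rightarrow> real \<Rightarrow> real) \<Rightarrow> (nat \<Rightarrow> real) \<Rightarrow> real mat" where
  "Gmat p ns w x = (let n = Nsum ns p in mat n n (\<lambda>(j, k). gfun p ns w j (x k)))"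

definition Vmat :: "nat \<Rightarrow> (nat \<Rightarrow> real) \<Rightarrow> real mat" where
  "Vmat n x = mat n n (\<lambda>(j, k). x k ^ j)"

definition block :: "(nat \<Rightarrow> nat) \<Rightarrow> (nat \<Rightarrow> real) \<Rightarrow> nat \<Rightarrow> real list" where
  "block ns x i = map (\<lambda>k. x (Nsum ns i + k)) [0..<ns i]"

end

theory Submission
  imports Defs
begin

text \<open>On a block of points lying in \<open>\<Gamma>\<^sub>j\<close>, every weight \<open>w\<^sub>i\<close> with \<open>i > j\<close> vanishes,
  so when each block lies in its own interval the matrix \<open>[g\<^sub>j(x\<^sub>k)]\<close> is block triangular and
  its determinant is the product of the weighted Vandermonde determinants of the blocks; splitting
  the full Vandermonde product into the same blocks gives the second formula of (ii). If the sorted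
  points are not distributed this way, every term of the Leibniz expansion vanishes: a nonzero term
  assigns to each point an interval containing it, this assignment is monotone because the points
  are sorted and the intervals ordered, and a monotone rearrangement of the block indices must be
  the identity. Finally \<open>det V \<cdot> det G\<close> is invariant under permuting the points, which reduces (i)
  to sorted points.\<close>

lemma det_mat_diag: "det (mat_diag n f) = (\<Prod>i<n. f i)"
  by (subst det_upper_triangular[of _ n])
     (auto simp: mat_diag_def prod_list_diag_prod lessThan_atLeast0)

lemma det_scale_cols:
  fixes A :: "'a :: comm_ring_1 mat"
  assumes "A \<in> carrier_mat n n"
  shows "det (mat n n (\<lambda>(i, j). A $$ (i, j) * c j)) = det A * (\<Prod>j<n. c j)"
  using assms by (simp add: mat_diag_mult_right[symmetric] det_mult[of _ n] det_mat_diag)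

lemma det_permute_cols:
  fixes A :: "'a :: comm_ring_1 mat"
  assumes A: "A \<in> carrier_mat n n" and t: "t permutes {0..<n}"
  shows "det (mat n n (\<lambda>(i, j). A $$ (i, t j))) = signof t * det A"
proof -
  have "mat n n (\<lambda>(i, j). A $$ (i, t j)) = transpose_mat (mat n n (\<lambda>(i, j). transpose_mat A $$ (t i, j)))"
    using A permutes_in_image[OF t] by (intro eq_matI) auto
  then show ?thesis
    using A det_permute_rows[OF _ t, of "transpose_mat A"]
    by (simp add: det_transpose[of _ n] det_transpose[OF A])
qed

lemma det_vandermonde:
  "det (mat n n (\<lambda>(j, k). (y k :: 'a :: idom) ^ j)) = (\<Prod>k<n. \<Prod>j<k. y k - y j)"
proof (induction n arbitrary: y)
  case 0
  then show ?case by simp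
next
  case (Suc n)
  define V where "V = mat (Suc n) (Suc n) (\<lambda>(j, k). y k ^ j)"
  \<comment> \<open>subtract \<open>y 0\<close> times each row from the next one\<close>
  define E where "E = mat (Suc n) (Suc n)
    (\<lambda>(i, j). if j = i then 1 else if 0 < i \<and> j = i - 1 then - y 0 else 0)"
  define W where "W = mat n n (\<lambda>(j, k). y (Suc k) ^ j * (y (Suc k) - y 0))"
  have E: "E \<in> carrier_mat (Suc n) (Suc n)" and V: "V \<in> carrier_mat (Suc n) (Suc n)"
    by (simp_all add: E_def V_def)
  have "det E = 1"
    by (subst det_lower_triangular[OF _ E]) (auto simp: E_def prod_list_diag_prod)
  have EV: "(E * V) $$ (i, k) = (if i = 0 then 1 else y k ^ (i - 1) * (y k - y 0))"
    if "i < Suc n" "k < Suc n" for i k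
  proof -
    have "(E * V) $$ (i, k) = (\<Sum>l<Suc n. E $$ (i, l) * y k ^ l)"
      using that by (simp add: E_def V_def scalar_prod_def lessThan_atLeast0)
    also have "\<dots> = y k ^ i - (if 0 < i then y 0 * y k ^ (i - 1) else 0)"
      using that by (cases i) (auto simp: E_def if_distrib[of "\<lambda>e. e * _"] sum.If_cases)
    finally show ?thesis by (cases i) (auto simp: algebra_simps)
  qed
  have EV_blocks: "E * V = four_block_mat (mat 1 1 (\<lambda>_. 1)) (mat 1 n (\<lambda>_. 1)) (0\<^sub>m n 1) W"
    using E V by (intro eq_matI) (auto simp: EV W_def simp del: index_mult_mat(1))
  have "det (E * V) = det W"
    unfolding EV_blocks by (subst det_four_block_mat_lower_left_zero_col) (auto simp: W_def det_single)
  also have "W = mat n n (\<lambda>(j, k). mat n n (\<lambda>(j, k). y (Suc k) ^ j) $$ (j, k) * (y (Suc k) - y 0))"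
    by (auto simp: W_def)
  finally have "det V = (\<Prod>k<n. \<Prod>j<k. y (Suc k) - y (Suc j)) * (\<Prod>k<n. y (Suc k) - y 0)"
    using det_mult[OF E V] \<open>det E = 1\<close> Suc.IH[of "\<lambda>k. y (Suc k)"] by (simp add: det_scale_cols)
  also have "\<dots> = (\<Prod>k<Suc n. \<Prod>j<k. y k - y j)"
    by (simp add: prod.lessThan_Suc_shift prod.distrib del: prod.lessThan_Suc)
  finally show ?case unfolding V_def .
qed

lemma det_weighted_vandermonde:
  "det (mat n n (\<lambda>(j, k). y k ^ j * c k)) = (\<Prod>k<n. \<Prod>j<k. y k - y j) * (\<Prod>k<n. (c k :: 'a :: idom))"
proof -
  have "mat n n (\<lambda>(j, k). y k ^ j * c k) = mat n n (\<lambda>(j, k). mat n n (\<lambda>(j, k). y k ^ j) $$ (j, k) * c k)"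
    by auto
  then show ?thesis by (simp add: det_scale_cols det_vandermonde)
qed

lemma vandermonde_prod_eq_0:
  fixes y :: "nat \<Rightarrow> 'a :: comm_ring_1"
  assumes "\<not> inj_on y {..<n}"
  shows "(\<Prod>k<n. \<Prod>j<k. y k - y j) = 0"
proof -
  obtain a b where "a < n" "b < n" "a \<noteq> b" "y a = y b"
    using assms by (auto simp: inj_on_def)
  then obtain k j where "k < n" "j < k" "y k = y j"
    by (metis linorder_neqE_nat)
  then have "(\<Prod>j<k. y k - y j) = 0"
    by (intro prod_zero) auto
  with \<open>k < n\<close> show ?thesis
    by (intro prod_zero) auto
qed

lemma vandermonde_prod_nonneg:
  fixes y :: "nat \<Rightarrow> 'a :: linordered_idom"
  assumes "strict_mono_on {..<n} y"
  shows "0 \<le> (\<Prod>k<n. \<Prod>j<k. y k - y j)"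
  using strict_mono_onD[OF assms] by (intro prod_nonneg) (auto simp: less_imp_le)

lemma obtain_sorting_permutation:
  fixes x :: "nat \<Rightarrow> 'a :: linorder"
  assumes inj: "inj_on x {..<n}"
  obtains t where "t permutes {..<n}" "strict_mono_on {..<n} (x \<circ> t)"
proof -
  define L where "L = sorted_list_of_set (x ` {..<n})"
  have "length L = n" "set L = x ` {..<n}" "sorted_wrt (<) L"
    using card_image[OF inj] by (simp_all add: L_def)
  then have L: "L ! i \<in> x ` {..<n}" if "i < n" for i
    using that by (metis nth_mem)
  define t where "t i = (if i < n then inv_into {..<n} x (L ! i) else i)" for i
  have t_less: "t i < n" if "i < n" for i
    using inv_into_into[OF L[OF that]] that by (simp add: t_def)
  have x_t: "x (t i) = L ! i" if "i < n" for i
    using f_inv_into_f[OF L[OF that]] that by (simp add: t_def)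
  have mono: "strict_mono_on {..<n} (x \<circ> t)"
    using \<open>length L = n\<close> \<open>sorted_wrt (<) L\<close>
    by (intro strict_mono_onI) (auto simp: x_t sorted_wrt_nth_less)
  then have "inj_on t {..<n}"
    by (metis inj_on_imageI2 strict_mono_on_imp_inj_on)
  then have "t ` {..<n} = {..<n}"
    using t_less by (intro card_subset_eq) (auto simp: card_image)
  with \<open>inj_on t {..<n}\<close> have "t permutes {..<n}"
    by (intro bij_imp_permutes) (auto simp: bij_betw_def t_def)
  with mono show thesis using that by blast
qed

lemma mono_on_le_iff_less_card:
  fixes g :: "nat \<Rightarrow> 'a :: linorder"
  assumes "mono_on {..<n} g" "k < n"
  shows "g k \<le> v \<longleftrightarrow> k < card {i. i < n \<and> g i \<le> v}"
proof
  assume "g k \<le> v"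
  then have "{..k} \<subseteq> {i. i < n \<and> g i \<le> v}"
    using assms mono_onD[OF assms(1), of _ k] by (auto intro: order_trans)
  from card_mono[OF _ this] show "k < card {i. i < n \<and> g i \<le> v}" by simp
next
  assume k: "k < card {i. i < n \<and> g i \<le> v}"
  show "g k \<le> v"
  proof (rule ccontr)
    assume "\<not> g k \<le> v"
    then have "{i. i < n \<and> g i \<le> v} \<subseteq> {..<k}"
      using assms by (auto dest: mono_onD[of _ g k] simp: not_less[symmetric])
    from card_mono[OF _ this] k show False by simp
  qed
qed

lemma mono_on_permute_eq:
  fixes f :: "nat \<Rightarrow> 'a :: linorder"
  assumes f: "mono_on {..<n} f" and ft: "mono_on {..<n} (f \<circ> t)"
    and t: "t permutes {..<n}" and k: "k < n"
  shows "f (t k) = f k"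
proof -
  have "card {i. i < n \<and> (f \<circ> t) i \<le> v} = card {i. i < n \<and> f i \<le> v}" for v
  proof -
    have image: "t ` {i. i < n \<and> f (t i) \<le> v} = {i. i < n \<and> f i \<le> v}"
    proof (intro equalityI subsetI)
      fix i assume i: "i \<in> {i. i < n \<and> f i \<le> v}"
      then obtain j where "j < n" "i = t j"
        using permutes_image[OF t] by (metis (no_types, lifting) imageE lessThan_iff mem_Collect_eq)
      with i show "i \<in> t ` {i. i < n \<and> f (t i) \<le> v}" by auto
    qed (use permutes_in_image[OF t] in auto)
    show ?thesis
      using card_image[OF permutes_inj_on[OF t], of "{i. i < n \<and> f (t i) \<le> v}"]
      by (simp add: image)
  qed
  then have "(f \<circ> t) k \<le> v \<longleftrightarrow> f k \<le> v" for v
    using mono_on_le_iff_less_card[OF f k] mono_on_le_iff_less_card[OF ft k] by simp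
  then show ?thesis by (metis antisym comp_apply order_refl)
qed

lemma Nsum_0 [simp]: "Nsum ns 0 = 0"
  by (simp add: Nsum_def)

lemma Nsum_Suc [simp]: "Nsum ns (Suc j) = Nsum ns j + ns j"
  by (simp add: Nsum_def)

lemma Nsum_mono: "j \<le> j' \<Longrightarrow> Nsum ns j \<le> Nsum ns j'"
  unfolding Nsum_def by (rule sum_mono2) auto

lemma Nsum_add_less: "j < p \<Longrightarrow> k < ns j \<Longrightarrow> Nsum ns j + k < Nsum ns p"
  using Nsum_mono[of "Suc j" p ns] by simp

lemma less_Nsum_imp_block:
  "m < Nsum ns p \<Longrightarrow> \<exists>j k. j < p \<and> k < ns j \<and> m = Nsum ns j + k"
proof (induction p)
  case (Suc p)
  show ?case
  proof (cases "m < Nsum ns p")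
    case True
    with Suc.IH show ?thesis by (meson less_SucI)
  next
    case False
    with Suc.prems show ?thesis
      by (intro exI[of _ p] exI[of _ "m - Nsum ns p"]) auto
  qed
qed simp

lemma Nsum_add_inject:
  assumes "k < ns j" "k' < ns j'" "Nsum ns j + k = Nsum ns j' + k'"
  shows "j = j' \<and> k = k'"
proof -
  have "\<not> j < j'" "\<not> j' < j"
    using assms Nsum_mono[of "Suc j" j' ns] Nsum_mono[of "Suc j'" j ns] by auto
  then show ?thesis using assms by auto
qed

definition block_index :: "(nat \<Rightarrow> nat) \<Rightarrow> nat \<Rightarrow> nat" where
  "block_index ns m = (THE j. \<exists>k<ns j. m = Nsum ns j + k)"

lemma block_index_Nsum_add [simp]: "k < ns j \<Longrightarrow> block_index ns (Nsum ns j + k) = j"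
  unfolding block_index_def by (rule the_equality) (auto dest: Nsum_add_inject)

lemma block_index_less: "m < Nsum ns p \<Longrightarrow> block_index ns m < p"
  using less_Nsum_imp_block by fastforce

lemma mono_on_block_index: "mono_on {..<Nsum ns p} (block_index ns)"
proof (rule mono_onI)
  fix a b assume "a \<in> {..<Nsum ns p}" "b \<in> {..<Nsum ns p}" "a \<le> b"
  then obtain i k j l where "k < ns i" "a = Nsum ns i + k" "l < ns j" "b = Nsum ns j + l"
    using less_Nsum_imp_block by (metis lessThan_iff)
  with \<open>a \<le> b\<close> show "block_index ns a \<le> block_index ns b"
    using Nsum_mono[of "Suc j" i ns] by (cases "j < i") auto
qed

lemma gfun_Nsum_add:
  assumes "j < p" "k < ns j"
  shows "gfun p ns w (Nsum ns j + k) x = x ^ k * w j x"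
proof -
  have "(THE j'. j' < p \<and> Nsum ns j' \<le> Nsum ns j + k \<and> Nsum ns j + k < Nsum ns (Suc j')) = j"
  proof (rule the_equality)
    fix j' assume "j' < p \<and> Nsum ns j' \<le> Nsum ns j + k \<and> Nsum ns j + k < Nsum ns (Suc j')"
    then show "j' = j"
      using Nsum_add_inject[of k ns j "Nsum ns j + k - Nsum ns j'" j'] assms by auto
  qed (use assms in simp)
  then show ?thesis unfolding gfun_def Let_def by simp
qed

lemma gfun_block_index:
  assumes "m < Nsum ns p"
  shows "gfun p ns w m y = y ^ (m - Nsum ns (block_index ns m)) * w (block_index ns m) y"
  using less_Nsum_imp_block[OF assms] by (auto simp: gfun_Nsum_add)

lemma prod_lessThan_add:
  fixes a b :: nat and g :: "nat \<Rightarrow> 'a :: comm_monoid_mult"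
  shows "(\<Prod>k<a + b. g k) = (\<Prod>k<a. g k) * (\<Prod>k<b. g (a + k))"
  by (induction b) (auto simp: mult.assoc)

lemma prod_lessThan_Nsum: "(\<Prod>k<Nsum ns p. g k) = (\<Prod>i<p. \<Prod>k<ns i. g (Nsum ns i + k))"
  by (induction p) (auto simp: prod_lessThan_add)

lemma Delta_block:
  "Delta (block ns x i) = (\<Prod>k<ns i. \<Prod>j<k. x (Nsum ns i + k) - x (Nsum ns i + j))"
  unfolding Delta_def block_def by (auto intro!: prod.cong)

lemma Delta2_block:
  "Delta2 (block ns x i) (block ns x i') =
     (\<Prod>k<ns i. \<Prod>j<ns i'. x (Nsum ns i + k) - x (Nsum ns i' + j))"
  unfolding Delta2_def block_def by (auto intro!: prod.cong)

lemma vandermonde_prod_blocks: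
  "(\<Prod>k<Nsum ns p. \<Prod>j<k. x k - x j)
     = (\<Prod>i<p. Delta (block ns x i)) * (\<Prod>j<p. \<Prod>i<j. Delta2 (block ns x j) (block ns x i))"
proof -
  have "(\<Prod>k<Nsum ns p. \<Prod>j<k. x k - x j)
      = (\<Prod>i<p. \<Prod>k<ns i. (\<Prod>i'<i. \<Prod>j<ns i'. x (Nsum ns i + k) - x (Nsum ns i' + j))
                            * (\<Prod>j<k. x (Nsum ns i + k) - x (Nsum ns i + j)))"
    by (simp add: prod_lessThan_Nsum prod_lessThan_add)
  also have "\<dots> = (\<Prod>i<p. Delta (block ns x i)) * (\<Prod>j<p. \<Prod>i<j. Delta2 (block ns x j) (block ns x i))"
    unfolding Delta_block Delta2_block prod.distrib
    by (simp add: mult.commute, subst (2) prod.swap, simp)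
  finally show ?thesis .
qed

lemma det_Vmat_blocks:
  "det (Vmat (Nsum ns p) x)
     = (\<Prod>i<p. Delta (block ns x i)) * (\<Prod>j<p. \<Prod>i<j. Delta2 (block ns x j) (block ns x i))"
  unfolding Vmat_def det_vandermonde vandermonde_prod_blocks ..

lemma Gmat_eq: "Gmat p ns w x = mat (Nsum ns p) (Nsum ns p) (\<lambda>(j, k). gfun p ns w j (x k))"
  by (simp add: Gmat_def Let_def)

lemma det_Vmat_Gmat_permute:
  assumes t: "t permutes {..<Nsum ns p}"
  shows "det (Vmat (Nsum ns p) (x \<circ> t)) * det (Gmat p ns w (x \<circ> t))
       = det (Vmat (Nsum ns p) x) * det (Gmat p ns w x)"
proof -
  let ?n = "Nsum ns p"
  have t': "t permutes {0..<?n}" and t_less: "\<And>i. i < ?n \<Longrightarrow> t i < ?n"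
    using t permutes_in_image[OF t] by (auto simp: lessThan_atLeast0)
  have "Vmat ?n (x \<circ> t) = mat ?n ?n (\<lambda>(i, j). Vmat ?n x $$ (i, t j))"
    "Gmat p ns w (x \<circ> t) = mat ?n ?n (\<lambda>(i, j). Gmat p ns w x $$ (i, t j))"
    by (auto simp: Vmat_def Gmat_eq t_less)
  then have "det (Vmat ?n (x \<circ> t)) = signof t * det (Vmat ?n x)"
    "det (Gmat p ns w (x \<circ> t)) = signof t * det (Gmat p ns w x)"
    by (simp_all add: det_permute_cols[OF _ t'] Vmat_def Gmat_eq)
  moreover have "signof t * signof t = (1 :: real)"
    by (simp add: sign_def)
  ultimately show ?thesis
    by (metis (no_types, lifting) mult.assoc mult.commute mult_1)
qed

locale angelesco_weights =
  fixes p :: nat and \<alpha> \<beta> :: "nat \<Rightarrow> real" and w :: "nat \<Rightarrow> real \<Rightarrow> real"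
  assumes interval_nonempty: "j < p \<Longrightarrow> \<alpha> j \<le> \<beta> j"
    and intervals_separated: "Suc j < p \<Longrightarrow> \<beta> j < \<alpha> (Suc j)"
    and weight_nonneg: "j < p \<Longrightarrow> 0 \<le> w j x"
    and weight_support: "j < p \<Longrightarrow> x \<notin> {\<alpha> j..\<beta> j} \<Longrightarrow> w j x = 0"
begin

lemma intervals_ordered: "j < j' \<Longrightarrow> j' < p \<Longrightarrow> \<beta> j < \<alpha> j'"
proof (induction j' rule: less_induct)
  case (less j')
  then obtain j0 where j0: "j' = Suc j0"
    by (metis lessE)
  show ?case
  proof (cases "j = j0")
    case False
    with less j0 have "\<beta> j < \<alpha> j0" by simp
    also have "\<alpha> j0 \<le> \<beta> j0" using less j0 interval_nonempty by simp
    also have "\<beta> j0 < \<alpha> j'" using less j0 intervals_separated by simp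
    finally show ?thesis .
  qed (use less j0 intervals_separated in simp)
qed

definition points_in_intervals :: "(nat \<Rightarrow> nat) \<Rightarrow> (nat \<Rightarrow> real) \<Rightarrow> bool" where
  "points_in_intervals ns x \<longleftrightarrow> (\<forall>j<p. \<forall>k<ns j. x (Nsum ns j + k) \<in> {\<alpha> j..\<beta> j})"

lemma det_Gmat_in_intervals:
  assumes "points_in_intervals ns x" "q \<le> p"
  shows "det (Gmat q ns w x) = (\<Prod>i<q. Delta (block ns x i) * (\<Prod>k<ns i. w i (x (Nsum ns i + k))))"
  using assms(2)
proof (induction q)
  case 0
  then show ?case by (simp add: Gmat_eq)
next
  case (Suc q)
  let ?N = "Nsum ns q"
  define B where "B = mat ?N (ns q) (\<lambda>(m, k). gfun (Suc q) ns w m (x (?N + k)))"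
  define D where "D = mat (ns q) (ns q) (\<lambda>(i, k). x (?N + k) ^ i * w q (x (?N + k)))"
  have lower_left: "w q (x (Nsum ns a + c)) = 0" if "a < q" "c < ns a" for a c
  proof (rule weight_support)
    have "x (Nsum ns a + c) \<le> \<beta> a"
      using assms(1) Suc.prems that by (simp add: points_in_intervals_def)
    also have "\<beta> a < \<alpha> q"
      using Suc.prems that by (simp add: intervals_ordered)
    finally show "x (Nsum ns a + c) \<notin> {\<alpha> q..\<beta> q}" by simp
  qed (use Suc.prems in simp)
  have "Gmat (Suc q) ns w x = four_block_mat (Gmat q ns w x) B (0\<^sub>m (ns q) ?N) D"
  proof (rule eq_matI)
    fix i j
    assume "i < dim_row (four_block_mat (Gmat q ns w x) B (0\<^sub>m (ns q) ?N) D)"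
      "j < dim_col (four_block_mat (Gmat q ns w x) B (0\<^sub>m (ns q) ?N) D)"
    then have ij: "i < ?N + ns q" "j < ?N + ns q" by (auto simp: Gmat_eq D_def)
    show "Gmat (Suc q) ns w x $$ (i, j) = four_block_mat (Gmat q ns w x) B (0\<^sub>m (ns q) ?N) D $$ (i, j)"
    proof (cases "i < ?N")
      case True
      then obtain a c where "a < q" "c < ns a" "i = Nsum ns a + c"
        using less_Nsum_imp_block by blast
      with True ij Suc.prems show ?thesis
        by (auto simp: Gmat_eq B_def D_def gfun_Nsum_add)
    next
      case False
      define b where "b = i - ?N"
      have i: "i = ?N + b" "b < ns q" using False ij by (auto simp: b_def)
      have "gfun (Suc q) ns w i y = y ^ b * w q y" for y
        using gfun_Nsum_add[of q "Suc q" b ns] i by simp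
      moreover have "j < ?N \<Longrightarrow> w q (x j) = 0"
        using less_Nsum_imp_block lower_left by blast
      ultimately show ?thesis
        using False ij by (auto simp: Gmat_eq D_def b_def)
    qed
  qed (auto simp: Gmat_eq D_def)
  then have "det (Gmat (Suc q) ns w x) = det (Gmat q ns w x) * det D"
    by (simp add: det_four_block_mat_lower_left_zero[of _ ?N _ "ns q"] Gmat_eq B_def D_def)
  also have "det D = Delta (block ns x q) * (\<Prod>k<ns q. w q (x (?N + k)))"
    unfolding D_def det_weighted_vandermonde Delta_block ..
  finally show ?case using Suc by simp
qed

lemma sorted_points_interval_index_mono:
  fixes x :: "nat \<Rightarrow> real" and h :: "nat \<Rightarrow> nat"
  assumes "strict_mono_on {..<n} x" and "\<And>k. k < n \<Longrightarrow> h k < p \<and> x k \<in> {\<alpha> (h k)..\<beta> (h k)}"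
  shows "mono_on {..<n} h"
proof (rule mono_onI, rule ccontr)
  fix a b assume ab: "a \<in> {..<n}" "b \<in> {..<n}" "a \<le> b" "\<not> h a \<le> h b"
  have "x a \<le> x b"
    using strict_mono_on_leD[OF assms(1) ab(1-3)] .
  moreover have "\<beta> (h b) < \<alpha> (h a)"
    using intervals_ordered ab assms(2)[of a] by simp
  ultimately show False
    using assms(2)[of a] assms(2)[of b] ab by auto
qed

lemma points_in_intervals_if_weights_nonzero:
  assumes sorted: "strict_mono_on {..<Nsum ns p} x" and \<sigma>: "\<sigma> permutes {0..<Nsum ns p}"
    and nonzero: "\<And>i. i < Nsum ns p \<Longrightarrow> w (block_index ns i) (x (\<sigma> i)) \<noteq> 0"
  shows "points_in_intervals ns x"
proof -
  let ?n = "Nsum ns p"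
  define \<tau> where "\<tau> = Hilbert_Choice.inv \<sigma>"
  have \<tau>: "\<tau> permutes {..<?n}"
    using permutes_inv[OF \<sigma>] by (simp add: \<tau>_def lessThan_atLeast0)
  have \<tau>_less: "\<tau> k < ?n" if "k < ?n" for k
    using permutes_in_image[OF \<tau>] that by simp
  have in_interval: "x (\<sigma> i) \<in> {\<alpha> (block_index ns i)..\<beta> (block_index ns i)}" if "i < ?n" for i
    using nonzero[OF that] weight_support block_index_less that by blast
  have x_in: "x k \<in> {\<alpha> ((block_index ns \<circ> \<tau>) k)..\<beta> ((block_index ns \<circ> \<tau>) k)}" if "k < ?n" for k
    using in_interval[OF \<tau>_less[OF that]] permutes_inverses(1)[OF \<sigma>] by (simp add: \<tau>_def)
  have "mono_on {..<?n} (block_index ns \<circ> \<tau>)"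
    using x_in \<tau>_less block_index_less
    by (intro sorted_points_interval_index_mono[OF sorted]) auto
  then have "block_index ns (\<tau> k) = block_index ns k" if "k < ?n" for k
    using mono_on_permute_eq[OF mono_on_block_index _ \<tau>] that by simp
  then have "x k \<in> {\<alpha> (block_index ns k)..\<beta> (block_index ns k)}" if "k < ?n" for k
    using x_in[OF that] that by simp
  then show ?thesis
    unfolding points_in_intervals_def by (metis Nsum_add_less block_index_Nsum_add)
qed

lemma det_Gmat_eq_0:
  assumes sorted: "strict_mono_on {..<Nsum ns p} x" and "\<not> points_in_intervals ns x"
  shows "det (Gmat p ns w x) = 0"
proof -
  let ?n = "Nsum ns p"
  have term_eq_0: "(\<Prod>i = 0..<?n. Gmat p ns w x $$ (i, \<sigma> i)) = 0" if \<sigma>: "\<sigma> permutes {0..<?n}" for \<sigma>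
  proof (rule ccontr)
    assume nonzero: "(\<Prod>i = 0..<?n. Gmat p ns w x $$ (i, \<sigma> i)) \<noteq> 0"
    have "w (block_index ns i) (x (\<sigma> i)) \<noteq> 0" if "i < ?n" for i
    proof -
      have "Gmat p ns w x $$ (i, \<sigma> i) \<noteq> 0"
        using nonzero that by simp
      then show ?thesis
        using that permutes_in_image[OF \<sigma>, of i] by (simp add: Gmat_eq gfun_block_index)
    qed
    with assms show False
      using points_in_intervals_if_weights_nonzero[OF sorted \<sigma>] by blast
  qed
  have "Gmat p ns w x \<in> carrier_mat ?n ?n"
    by (simp add: Gmat_eq)
  then show ?thesis
    by (simp add: det_def' term_eq_0)
qed

lemma det_Gmat_nonneg:
  assumes sorted: "strict_mono_on {..<Nsum ns p} x"
  shows "0 \<le> det (Gmat p ns w x)"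
proof (cases "points_in_intervals ns x")
  case True
  have "0 \<le> Delta (block ns x i)" if "i < p" for i
    unfolding Delta_block
    by (rule vandermonde_prod_nonneg, rule strict_mono_onI)
       (use that Nsum_add_less strict_mono_onD[OF sorted] in auto)
  then show ?thesis
    using det_Gmat_in_intervals[OF True order_refl] weight_nonneg
    by (auto intro!: prod_nonneg mult_nonneg_nonneg)
next
  case False
  then show ?thesis using det_Gmat_eq_0[OF sorted] by simp
qed

lemma det_Vmat_Gmat_nonneg: "0 \<le> det (Vmat (Nsum ns p) x) * det (Gmat p ns w x)"
proof (cases "inj_on x {..<Nsum ns p}")
  case True
  then obtain t where t: "t permutes {..<Nsum ns p}" and sorted: "strict_mono_on {..<Nsum ns p} (x \<circ> t)"
    by (rule obtain_sorting_permutation)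
  have "0 \<le> det (Vmat (Nsum ns p) (x \<circ> t)) * det (Gmat p ns w (x \<circ> t))"
    using det_Gmat_nonneg[OF sorted] vandermonde_prod_nonneg[OF sorted]
    by (simp add: Vmat_def det_vandermonde)
  then show ?thesis
    by (simp add: det_Vmat_Gmat_permute[OF t])
next
  case False
  then show ?thesis
    by (simp add: Vmat_def det_vandermonde vandermonde_prod_eq_0)
qed

end

theorem mainTheorem3:
  fixes p :: nat and \<alpha> \<beta> :: "nat \<Rightarrow> real" and w :: "nat \<Rightarrow> real \<Rightarrow> real"
    and ns :: "nat \<Rightarrow> nat"
  assumes "p \<ge> 1"
    and "\<And>j. j < p \<Longrightarrow> \<alpha> j \<le> \<beta> j"
    and "\<And>j. Suc j < p \<Longrightarrow> \<beta> j < \<alpha> (Suc j)"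
    and "\<And>j x. j < p \<Longrightarrow> w j x \<ge> 0"
    and "\<And>j x. j < p \<Longrightarrow> x \<notin> {\<alpha> j..\<beta> j} \<Longrightarrow> w j x = 0"
  shows
    "(\<forall>x :: nat \<Rightarrow> real. strict_mono_on {..<Nsum ns p} x \<longrightarrow> det (Gmat p ns w x) \<ge> 0)
     \<and> (\<forall>x :: nat \<Rightarrow> real. det (Vmat (Nsum ns p) x) * det (Gmat p ns w x) \<ge> 0)
     \<and> (\<forall>x :: nat \<Rightarrow> real. strict_mono_on {..<Nsum ns p} x
          \<longrightarrow> (\<forall>j<p. \<forall>k<ns j. x (Nsum ns j + k) \<in> {\<alpha> j..\<beta> j})
          \<longrightarrow> det (Gmat p ns w x)
                = (\<Prod>i<p. Delta (block ns x i) * (\<Prod>k<ns i. w i (x (Nsum ns i + k))))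
            \<and> det (Vmat (Nsum ns p) x) * det (Gmat p ns w x)
                = (\<Prod>i<p. Delta (block ns x i) ^ 2)
                  * (\<Prod>j<p. \<Prod>i<j. Delta2 (block ns x j) (block ns x i))
                  * (\<Prod>i<p. \<Prod>k<ns i. w i (x (Nsum ns i + k))))"
proof -
  interpret angelesco_weights p \<alpha> \<beta> w
    using assms(2-5) by unfold_locales
  have "det (Vmat (Nsum ns p) x) * det (Gmat p ns w x)
          = (\<Prod>i<p. Delta (block ns x i) ^ 2)
            * (\<Prod>j<p. \<Prod>i<j. Delta2 (block ns x j) (block ns x i))
            * (\<Prod>i<p. \<Prod>k<ns i. w i (x (Nsum ns i + k)))"
    if "points_in_intervals ns x" for x
    unfolding det_Vmat_blocks det_Gmat_in_intervals[OF that order_refl]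
    by (simp add: prod.distrib power2_eq_square algebra_simps)
  then show ?thesis
    using det_Gmat_nonneg det_Vmat_Gmat_nonneg det_Gmat_in_intervals[OF _ order_refl]
    by (auto simp: points_in_intervals_def)
qed

end
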